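(* There exists a countable two-dimensional subshift of finite type $X$ whose Cantor–Bendixson rank is at least $\omega$.
   Context: A two-dimensional subshift over a finite alphabet $S$ is a closed subset of $S^{\mathbb{Z}^2}$ (product topology) invariant under both coordinate shifts; it is of finite type (SFT) if it is the set of configurations avoiding a finite set of forbidden finite patterns. Derivatives: $X^{(0)} = X$, $X^{(\alpha+1)}$ is the set of non-isolated points of $X^{(\alpha)}$, and $X^{(\lambda)} = \bigcap_{\alpha<\lambda} X^{(\alpha)}$ for limit $\lambda$. The rank of $X$ is the least ordinal $\lambda$ with $X^{(\lambda)} = X^{(\lambda+1)}$. *)

theory Defs
  imports "HOL-Analysis.Analysis"
begin

text \<open>The function type carries the product topology (Function_Topology) and nat carries
  the discrete topology, so this is the product topology on S^(Z^2).\<close>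

type_synonym config = "int \<times> int \<Rightarrow> nat"

definition occurs :: "(int \<times> int \<rightharpoonup> nat) \<Rightarrow> config \<Rightarrow> bool" where
  "occurs p x \<longleftrightarrow> (\<exists>a b. \<forall>u\<in>dom p. p u = Some (x (fst u + a, snd u + b)))"

definition is_SFT :: "nat set \<Rightarrow> config set \<Rightarrow> bool" where
  "is_SFT S X \<longleftrightarrow> finite S \<and>
     (\<exists>F. finite F \<and> (\<forall>p\<in>F. finite (dom p) \<and> ran p \<subseteq> S) \<and>
          X = {x. range x \<subseteq> S \<and> (\<forall>p\<in>F. \<not> occurs p x)})"

definition cb_deriv :: "config set \<Rightarrow> config set" where
  "cb_deriv A = {x \<in> A. x islimpt A}"

definition cb_iter :: "nat \<Rightarrow> config set \<Rightarrow> config set" where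
  "cb_iter n A = (cb_deriv ^^ n) A"

end

theory Submission
  imports Defs
begin

text \<open>
  Configurations of the subshift draw a horizontal strip, possibly empty or unbounded, in which
  some columns are marked. A budget layer inside the strip loses its bottom row at every mark,
  and a timer layer forces consecutive marks to be further apart than the height of the strip.
  Hence a bounded strip carries at most as many marks as it is high, an unbounded one at most
  one mark, and every configuration is determined by its column 0, its finite set of marks and
  the finite set of columns where the timer starts to saturate: the subshift is countable.
  A strip of height n with k spaced marks is the limit of strips of height n with k + 1 marks
  (add a mark far away), so the configurations with budget to spare for m further marks lie
  in the m-th derived set, which is therefore nonempty. Since a nonempty countable compact set
  has an isolated point (Baire), the derived sets never stabilise.
\<close>

section \<open>Configuration spaces\<close>

lemma Hausdorff_space_euclidean_t2: "Hausdorff_space (euclidean :: 'a::t2_space topology)"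
  unfolding Hausdorff_space_def disjnt_def using hausdorff by auto

lemma Hausdorff_space_functions: "Hausdorff_space (euclidean :: ('a \<Rightarrow> 'b::t2_space) topology)"
  using Hausdorff_space_product_topology[of "\<lambda>i::'a. euclidean :: 'b topology" UNIV]
  by (simp add: euclidean_product_topology Hausdorff_space_euclidean_t2)

lemma closed_derived_set:
  fixes S :: "('a \<Rightarrow> 'b::t2_space) set"
  shows "closed {x. x islimpt S}"
proof -
  have "{x. x islimpt S} = euclidean derived_set_of S"
    by (auto simp: derived_set_of_def islimpt_def)
  then show ?thesis
    using closedin_derived_set_of[OF Hausdorff_space_functions] by simp
qed

lemma open_cylinder:
  fixes x :: "'a \<Rightarrow> 'b::discrete_topology"
  assumes "finite W"
  shows "open {y. \<forall>u\<in>W. y u = x u}"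
proof -
  have "open {y::'a\<Rightarrow>'b. \<forall>u\<in>W. y (id u) \<in> {x u}}"
    by (rule product_topology_basis') (auto simp: assms open_discrete)
  then show ?thesis by simp
qed

lemma islimpt_cylinderI:
  fixes x :: "'a \<Rightarrow> 'b::topological_space"
  assumes "\<And>W. finite W \<Longrightarrow> \<exists>y\<in>A. y \<noteq> x \<and> (\<forall>u\<in>W. y u = x u)"
  shows "x islimpt A"
proof (rule islimptI)
  fix T assume "x \<in> T" "open T"
  then have T: "openin (product_topology (\<lambda>i. euclidean) UNIV) T"
    by (simp add: open_fun_def)
  obtain U where U: "x \<in> (\<Pi>\<^sub>E i\<in>UNIV. U i)" "\<forall>i. openin euclidean (U i)"
      "finite {i. U i \<noteq> topspace euclidean}" "(\<Pi>\<^sub>E i\<in>UNIV. U i) \<subseteq> T"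
    using product_topology_open_contains_basis[OF T \<open>x \<in> T\<close>] by blast
  obtain y where "y \<in> A" "y \<noteq> x" "\<forall>u\<in>{i. U i \<noteq> UNIV}. y u = x u"
    using assms[of "{i. U i \<noteq> UNIV}"] U(3) by auto
  moreover from this have "y \<in> (\<Pi>\<^sub>E i\<in>UNIV. U i)"
    using U(1) by (force simp: PiE_iff)
  ultimately show "\<exists>y\<in>A. y \<in> T \<and> y \<noteq> x"
    using U(4) by blast
qed

lemma closed_finitely_determined:
  fixes Q :: "('a \<Rightarrow> 'b::discrete_topology) \<Rightarrow> bool"
  assumes "finite W" and "\<And>x y. \<forall>u\<in>W. x u = y u \<Longrightarrow> Q x = Q y"
  shows "closed {x. Q x}"
  unfolding closed_def
proof (subst open_subopen, intro ballI)
  fix x assume "x \<in> - {x. Q x}"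
  then show "\<exists>T. open T \<and> x \<in> T \<and> T \<subseteq> - {x. Q x}"
    using assms by (intro exI[of _ "{y. \<forall>u\<in>W. y u = x u}"]) (auto simp: open_cylinder)
qed

lemma compact_functions_into_finite:
  assumes "finite S"
  shows "compact {x :: 'a \<Rightarrow> 'b::topological_space. range x \<subseteq> S}"
proof -
  have "compactin (product_topology (\<lambda>i. euclidean) UNIV) (\<Pi>\<^sub>E i\<in>(UNIV::'a set). S)"
    by (subst compactin_PiE) (auto simp: assms finite_imp_compact)
  moreover have "(\<Pi>\<^sub>E i\<in>(UNIV::'a set). S) = {x :: 'a \<Rightarrow> 'b. range x \<subseteq> S}"
    by (auto simp: PiE_iff)
  ultimately show ?thesis
    by (simp add: euclidean_product_topology)
qed

lemma countable_compact_has_isolated_point: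
  fixes K :: "('a \<Rightarrow> 'b::t2_space) set"
  assumes "compact K" "countable K" "K \<noteq> {}"
  shows "\<exists>x\<in>K. \<not> x islimpt K"
proof (rule ccontr)
  assume perfect: "\<not> ?thesis"
  let ?X = "top_of_set K"
  have "compact_space ?X"
    using assms(1) by (simp add: compact_space_subtopology)
  moreover have "Hausdorff_space ?X"
    by (rule Hausdorff_space_subtopology[OF Hausdorff_space_functions])
  ultimately have "locally_compact_space ?X \<and> regular_space ?X"
    using compact_imp_locally_compact_space compact_Hausdorff_imp_regular_space by blast
  moreover have "closedin ?X {k} \<and> ?X interior_of {k} = {}" if "k \<in> K" for k
  proof
    show "closedin ?X {k}"
      using that closedin_Hausdorff_singleton[OF \<open>Hausdorff_space ?X\<close>] by simp
    show "?X interior_of {k} = {}"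
    proof (rule ccontr)
      assume "?X interior_of {k} \<noteq> {}"
      then have "openin ?X {k}"
        by (metis interior_of_subset openin_interior_of subset_singletonD)
      then obtain U where "open U" "{k} = K \<inter> U" by (auto simp: openin_open)
      then show False
        using perfect that islimptE[of k K U] by blast
    qed
  qed
  ultimately have "?X interior_of \<Union>((\<lambda>k. {k}) ` K) = {}"
    using assms(2) by (intro Baire_category_alt) auto
  then show False
    using assms(3) interior_of_topspace[of ?X] by simp
qed

section \<open>Subshifts of finite type\<close>

lemma closed_SFT:
  assumes "is_SFT S X"
  shows "closed X"
proof -
  obtain F where F: "\<forall>p\<in>F. finite (dom p)" and X: "X = {x. range x \<subseteq> S \<and> (\<forall>p\<in>F. \<not> occurs p x)}"
    using assms by (auto simp: is_SFT_def)
  define shifted where "shifted p a b = (\<lambda>u. (fst u + a, snd u + b)) ` dom p"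
    for p :: "int \<times> int \<rightharpoonup> nat" and a b :: int
  have "X = (\<Inter>u. {x. x u \<in> S}) \<inter>
      (\<Inter>(p, a, b)\<in>F \<times> UNIV. {x. \<not> (\<forall>u\<in>dom p. p u = Some (x (fst u + a, snd u + b)))})"
    unfolding X occurs_def by auto
  moreover have "closed {x :: config. x u \<in> S}" for u
    by (rule closed_finitely_determined[of "{u}"]) auto
  moreover have "closed {x :: config. \<not> (\<forall>u\<in>dom p. p u = Some (x (fst u + a, snd u + b)))}"
    if "p \<in> F" for p a b
    using F that by (intro closed_finitely_determined[of "shifted p a b"]) (auto simp: shifted_def)
  ultimately show ?thesis
    by (auto intro!: closed_Int closed_INT)
qed

lemma compact_SFT:
  assumes "is_SFT S X"
  shows "compact X"
proof -
  have "X = {x. range x \<subseteq> S} \<inter> X" and "finite S"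
    using assms by (auto simp: is_SFT_def)
  then show ?thesis
    by (metis compact_Int_closed compact_functions_into_finite closed_SFT[OF assms])
qed

lemma is_SFT_window_constraint:
  fixes ok :: "nat \<Rightarrow> nat \<Rightarrow> nat \<Rightarrow> nat \<Rightarrow> bool"
  assumes "finite S"
  shows "is_SFT S {x. range x \<subseteq> S \<and> (\<forall>i j. ok (x (i,j)) (x (i+1,j)) (x (i,j+1)) (x (i+1,j+1)))}"
proof -
  define window :: "nat \<Rightarrow> nat \<Rightarrow> nat \<Rightarrow> nat \<Rightarrow> int \<times> int \<rightharpoonup> nat"
    where "window p q r s = [(0,0) \<mapsto> p, (1,0) \<mapsto> q, (0,1) \<mapsto> r, (1,1) \<mapsto> s]"
    for p q r s
  have dom_window: "dom (window p q r s) = {(0,0),(1,0),(0,1),(1,1)}" for p q r s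
    by (auto simp: window_def)
  have occurs_window: "occurs (window p q r s) x \<longleftrightarrow>
      (\<exists>a b. x (a,b) = p \<and> x (a+1,b) = q \<and> x (a,b+1) = r \<and> x (a+1,b+1) = s)" for p q r s x
    unfolding occurs_def dom_window by (auto simp: window_def add.commute)
  define Bad where "Bad = {(p,q,r,s) \<in> S \<times> S \<times> S \<times> S. \<not> ok p q r s}"
  define F where "F = (\<lambda>(p,q,r,s). window p q r s) ` Bad"
  have "finite Bad"
    using assms by (auto simp: Bad_def intro: finite_subset[of _ "S \<times> S \<times> S \<times> S"])
  then have "finite F"
    by (simp add: F_def)
  moreover have "finite (dom p) \<and> ran p \<subseteq> S" if "p \<in> F" for p
    using that by (auto simp: F_def Bad_def dom_window window_def ran_def split: if_splits)
  moreover have "(\<forall>p\<in>F. \<not> occurs p x) \<longleftrightarrow>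
      (\<forall>i j. ok (x (i,j)) (x (i+1,j)) (x (i,j+1)) (x (i+1,j+1)))" if "range x \<subseteq> S" for x
  proof -
    have "x (i,j) \<in> S" for i j using that by auto
    then show ?thesis
      by (auto simp: F_def Bad_def occurs_window) (metis (no_types, lifting))
  qed
  ultimately show ?thesis
    unfolding is_SFT_def using assms by (intro conjI exI[of _ F]) auto
qed

section \<open>Cantor--Bendixson derivatives\<close>

lemma cb_deriv_subset: "cb_deriv A \<subseteq> A"
  by (auto simp: cb_deriv_def)

lemma compact_cb_deriv:
  assumes "compact A"
  shows "compact (cb_deriv A)"
proof -
  have "cb_deriv A = A \<inter> {x. x islimpt A}"
    by (auto simp: cb_deriv_def)
  then show ?thesis
    using compact_Int_closed[OF assms closed_derived_set] by simp
qed

lemma compact_cb_iter: "compact A \<Longrightarrow> compact (cb_iter n A)"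
  by (induction n) (simp_all add: cb_iter_def compact_cb_deriv)

lemma cb_iter_subset: "cb_iter n A \<subseteq> A"
  by (induction n) (use cb_deriv_subset in \<open>auto simp: cb_iter_def\<close>)

lemma cb_deriv_neq:
  assumes "compact A" "countable A" "A \<noteq> {}"
  shows "cb_deriv A \<noteq> A"
  using countable_compact_has_isolated_point[OF assms] by (auto simp: cb_deriv_def)

lemma cb_iter_Suc_neq:
  assumes "compact A" "countable A" "cb_iter n A \<noteq> {}"
  shows "cb_iter (Suc n) A \<noteq> cb_iter n A"
  using cb_deriv_neq[OF compact_cb_iter[OF assms(1)] countable_subset[OF cb_iter_subset assms(2)]
      assms(3)]
  by (simp add: cb_iter_def)

lemma subset_cb_iter:
  assumes "H 0 \<subseteq> A" and "\<And>m. H (Suc m) \<subseteq> H m" and "\<And>m x. x \<in> H (Suc m) \<Longrightarrow> x islimpt H m"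
  shows "H n \<subseteq> cb_iter n A"
proof (induction n)
  case 0
  with assms(1) show ?case by (simp add: cb_iter_def)
next
  case (Suc n)
  have "x islimpt cb_iter n A" if "x \<in> H (Suc n)" for x
    using assms(3)[OF that] Suc islimpt_subset by blast
  with Suc assms(2) show ?case by (auto simp: cb_iter_def cb_deriv_def)
qed

section \<open>The strip subshift\<close>

text \<open>
  A symbol is a 5-bit number. In the configuration \<open>strip_config n P\<close> the bits of the cell
  at \<open>(i, y)\<close> say: \<open>0 \<le> y\<close> (on or above the floor), \<open>y < n\<close> (below the roof), \<open>y\<close> lies
  under the budget line of column \<open>i\<close>, \<open>y\<close> lies under the timer line of column \<open>i\<close>, and
  column \<open>i\<close> is marked inside the strip. The budget line drops by one row at each mark; the
  timer line restarts at the floor after a mark, climbs one row per column and must have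
  reached the roof just before the next mark.
\<close>

definition cell :: "bool \<Rightarrow> bool \<Rightarrow> bool \<Rightarrow> bool \<Rightarrow> bool \<Rightarrow> nat" where
  "cell a c b t f =
    of_bool a + 2 * (of_bool c + 2 * (of_bool b + 2 * (of_bool t + 2 * of_bool f)))"

definition above_floor :: "nat \<Rightarrow> bool" where "above_floor v = odd v"
definition below_roof :: "nat \<Rightarrow> bool" where "below_roof v = odd (v div 2)"
definition budget :: "nat \<Rightarrow> bool" where "budget v = odd (v div 4)"
definition timer :: "nat \<Rightarrow> bool" where "timer v = odd (v div 8)"
definition marked :: "nat \<Rightarrow> bool" where "marked v = odd (v div 16)"

lemma cell_bits [simp]:
  "above_floor (cell a c b t f) = a" "below_roof (cell a c b t f) = c" "budget (cell a c b t f) = b"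
  "timer (cell a c b t f) = t" "marked (cell a c b t f) = f"
  by (simp_all add: cell_def above_floor_def below_roof_def budget_def timer_def marked_def
      div_mult2_eq[symmetric] of_bool_def)

lemma cell_less: "cell a c b t f < 32"
  by (simp add: cell_def of_bool_def)

lemma cell_of_bits:
  "\<forall>v\<in>{..<32::nat}. cell (above_floor v) (below_roof v) (budget v) (timer v) (marked v) = v"
  by (simp add: lessThan_nat_numeral cell_def above_floor_def below_roof_def budget_def timer_def
      marked_def)

lemma symbol_eqI:
  assumes "v < 32" "w < 32" "above_floor v = above_floor w" "below_roof v = below_roof w"
    "budget v = budget w" "timer v = timer w" "marked v = marked w"
  shows "v = w"
proof -
  have "v = cell (above_floor v) (below_roof v) (budget v) (timer v) (marked v)"
    using assms(1) cell_of_bits by simp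
  also have "\<dots> = cell (above_floor w) (below_roof w) (budget w) (timer w) (marked w)"
    using assms(3-7) by simp
  also have "\<dots> = w"
    using assms(2) cell_of_bits by simp
  finally show ?thesis .
qed

definition in_strip :: "nat \<Rightarrow> bool" where "in_strip v \<longleftrightarrow> above_floor v \<and> below_roof v"

definition cell_ok :: "nat \<Rightarrow> bool" where
  "cell_ok v \<longleftrightarrow> (\<not> above_floor v \<longrightarrow> below_roof v \<and> budget v \<and> timer v \<and> \<not> marked v) \<and>
     (budget v \<longrightarrow> below_roof v) \<and> (timer v \<longrightarrow> below_roof v) \<and> (marked v \<longrightarrow> in_strip v)"

definition vert_ok :: "nat \<Rightarrow> nat \<Rightarrow> bool" where
  "vert_ok v v' \<longleftrightarrow> (above_floor v \<longrightarrow> above_floor v') \<and> (below_roof v' \<longrightarrow> below_roof v) \<and>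
     (budget v' \<longrightarrow> budget v) \<and> (timer v' \<longrightarrow> timer v) \<and>
     (in_strip v \<and> in_strip v' \<longrightarrow> (marked v \<longleftrightarrow> marked v'))"

definition horiz_ok :: "nat \<Rightarrow> nat \<Rightarrow> bool" where
  "horiz_ok v w \<longleftrightarrow> (above_floor v \<longleftrightarrow> above_floor w) \<and> (below_roof v \<longleftrightarrow> below_roof w)"

definition step_ok :: "nat \<Rightarrow> nat \<Rightarrow> nat \<Rightarrow> nat \<Rightarrow> bool" where
  "step_ok v w v' w' \<longleftrightarrow>
     (in_strip w' \<longrightarrow>
        (if marked w' then \<not> timer w' \<and> (timer v' \<longleftrightarrow> below_roof v') else (timer w' \<longleftrightarrow> timer v))) \<and>
     (in_strip w \<longrightarrow> (if marked w then (budget w \<longleftrightarrow> budget v') else (budget w \<longleftrightarrow> budget v))) \<and>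
     (marked w' \<and> \<not> above_floor w \<longrightarrow> budget v')"

definition window_ok :: "nat \<Rightarrow> nat \<Rightarrow> nat \<Rightarrow> nat \<Rightarrow> bool" where
  "window_ok v w v' w' \<longleftrightarrow> cell_ok v \<and> cell_ok w \<and> cell_ok v' \<and> cell_ok w' \<and>
     vert_ok v v' \<and> vert_ok w w' \<and> horiz_ok v w \<and> horiz_ok v' w' \<and> step_ok v w v' w'"

definition strip_shift :: "config set" where
  "strip_shift = {x. range x \<subseteq> {..<32} \<and>
     (\<forall>i j. window_ok (x (i,j)) (x (i+1,j)) (x (i,j+1)) (x (i+1,j+1)))}"

lemma is_SFT_strip_shift: "is_SFT {..<32} strip_shift"
  unfolding strip_shift_def by (rule is_SFT_window_constraint) simp

section \<open>Points of high rank\<close>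

definition spaced :: "nat \<Rightarrow> int set \<Rightarrow> bool" where
  "spaced n P \<longleftrightarrow> 0 < n \<and> finite P \<and> card P \<le> n \<and> (\<forall>p\<in>P. \<forall>q\<in>P. p < q \<longrightarrow> int n < q - p)"

definition marks_upto :: "int set \<Rightarrow> int \<Rightarrow> int set" where
  "marks_upto P i = {p\<in>P. p \<le> i}"

definition budget_height :: "nat \<Rightarrow> int set \<Rightarrow> int \<Rightarrow> int" where
  "budget_height n P i = int n - int (card (marks_upto P i))"

definition timer_height :: "nat \<Rightarrow> int set \<Rightarrow> int \<Rightarrow> int" where
  "timer_height n P i =
    (if marks_upto P i = {} then int n else min (int n) (i - Max (marks_upto P i)))"

definition strip_config :: "nat \<Rightarrow> int set \<Rightarrow> config" where
  "strip_config n P = (\<lambda>(i,y). cell (0 \<le> y) (y < int n) (y < budget_height n P i)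
     (y < timer_height n P i) (i \<in> P \<and> 0 \<le> y \<and> y < int n))"

lemma strip_config_bits [simp]:
  "above_floor (strip_config n P (i,y)) \<longleftrightarrow> 0 \<le> y"
  "below_roof (strip_config n P (i,y)) \<longleftrightarrow> y < int n"
  "budget (strip_config n P (i,y)) \<longleftrightarrow> y < budget_height n P i"
  "timer (strip_config n P (i,y)) \<longleftrightarrow> y < timer_height n P i"
  "marked (strip_config n P (i,y)) \<longleftrightarrow> i \<in> P \<and> 0 \<le> y \<and> y < int n"
  by (simp_all add: strip_config_def)

lemma marks_upto_Suc:
  "marks_upto P (i+1) = (if i+1 \<in> P then insert (i+1) (marks_upto P i) else marks_upto P i)"
proof (rule set_eqI)
  fix p
  show "p \<in> marks_upto P (i+1) \<longleftrightarrow>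
      p \<in> (if i+1 \<in> P then insert (i+1) (marks_upto P i) else marks_upto P i)"
    by (cases "p = i+1") (auto simp: marks_upto_def)
qed

lemma finite_marks_upto: "finite P \<Longrightarrow> finite (marks_upto P i)"
  by (simp add: marks_upto_def)

lemma budget_height_bounds:
  assumes "spaced n P"
  shows "0 \<le> budget_height n P i" "budget_height n P i \<le> int n"
proof -
  have "card (marks_upto P i) \<le> card P"
    using assms by (intro card_mono) (auto simp: spaced_def marks_upto_def)
  then show "0 \<le> budget_height n P i"
    using assms by (simp add: budget_height_def spaced_def)
qed (simp add: budget_height_def)

lemma timer_height_bounds:
  assumes "spaced n P"
  shows "0 \<le> timer_height n P i" "timer_height n P i \<le> int n"
proof -
  have "Max (marks_upto P i) \<le> i" if "marks_upto P i \<noteq> {}"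
    using that assms Max_in[OF finite_marks_upto that] by (auto simp: spaced_def marks_upto_def)
  then show "0 \<le> timer_height n P i"
    by (simp add: timer_height_def)
qed (simp add: timer_height_def)

lemma heights_at_mark:
  assumes P: "spaced n P" and i: "i+1 \<in> P"
  shows "1 \<le> budget_height n P i" "budget_height n P (i+1) = budget_height n P i - 1"
    "timer_height n P i = int n" "timer_height n P (i+1) = 0"
proof -
  have fin: "finite (marks_upto P i)" and "i+1 \<notin> marks_upto P i" and "marks_upto P i \<subseteq> P"
    using P by (auto simp: spaced_def marks_upto_def)
  then show "budget_height n P (i+1) = budget_height n P i - 1"
    using i by (simp add: budget_height_def marks_upto_Suc)
  have "marks_upto P i \<subset> P"
    using i \<open>i+1 \<notin> marks_upto P i\<close> \<open>marks_upto P i \<subseteq> P\<close> by blast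
  then have "card (marks_upto P i) < card P"
    using P by (intro psubset_card_mono) (auto simp: spaced_def)
  then show "1 \<le> budget_height n P i"
    using P by (simp add: budget_height_def spaced_def)
  have "Max (insert (i+1) (marks_upto P i)) = i+1"
    using fin by (intro Max_eqI) (auto simp: marks_upto_def)
  then show "timer_height n P (i+1) = 0"
    using i by (simp add: timer_height_def marks_upto_Suc)
  have "int n < i + 1 - Max (marks_upto P i)" if "marks_upto P i \<noteq> {}"
    using P i Max_in[OF fin that] by (auto simp: spaced_def marks_upto_def)
  then show "timer_height n P i = int n"
    by (cases "marks_upto P i = {}") (auto simp: timer_height_def)
qed

lemma heights_off_mark:
  assumes "i+1 \<notin> P"
  shows "budget_height n P (i+1) = budget_height n P i"
    "timer_height n P (i+1) = min (int n) (timer_height n P i + 1)"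
  using assms by (auto simp: budget_height_def timer_height_def marks_upto_Suc min_def)

lemma strip_config_in_shift:
  assumes P: "spaced n P"
  shows "strip_config n P \<in> strip_shift"
proof -
  have "step_ok (strip_config n P (i,j)) (strip_config n P (i+1,j))
      (strip_config n P (i,j+1)) (strip_config n P (i+1,j+1))" for i j
    using heights_at_mark[OF P, of i] heights_off_mark[of i P n]
    by (cases "i+1 \<in> P") (auto simp: step_ok_def in_strip_def)
  moreover have "cell_ok (strip_config n P (i,j))" for i j
    using budget_height_bounds[OF P, of i] timer_height_bounds[OF P, of i]
    by (auto simp: cell_ok_def in_strip_def)
  ultimately show ?thesis
    by (auto simp: strip_shift_def window_ok_def vert_ok_def horiz_ok_def in_strip_def
        strip_config_def[of n P] cell_less)
qed

definition with_slack :: "nat \<Rightarrow> config set" where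
  "with_slack m = {strip_config n P | n P. spaced n P \<and> card P + m \<le> n}"

lemma with_slack_subset: "with_slack m \<subseteq> strip_shift"
  using strip_config_in_shift by (auto simp: with_slack_def)

lemma with_slack_Suc_subset: "with_slack (Suc m) \<subseteq> with_slack m"
  unfolding with_slack_def by force

lemma with_slack_nonempty: "with_slack m \<noteq> {}"
proof -
  have "strip_config (Suc m) {} \<in> with_slack m"
    unfolding with_slack_def
    by (intro CollectI exI[of _ "Suc m"] exI[of _ "{}"]) (simp add: spaced_def)
  then show ?thesis by blast
qed

lemma strip_config_insert_right:
  assumes "i < q"
  shows "strip_config n (insert q P) (i,y) = strip_config n P (i,y)"
proof -
  have "marks_upto (insert q P) i = marks_upto P i"
    using assms by (auto simp: marks_upto_def)
  with assms show ?thesis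
    by (simp add: strip_config_def budget_height_def timer_height_def)
qed

lemma spaced_insert_far:
  assumes P: "spaced n P" and "card P < n" and far: "\<And>p. p \<in> P \<Longrightarrow> p + int n < q"
  shows "spaced n (insert q P)" "card (insert q P) = Suc (card P)"
proof -
  have "q \<notin> P"
    using far by fastforce
  then show card: "card (insert q P) = Suc (card P)"
    using P by (simp add: spaced_def)
  have "int n < p' - p" if "p \<in> insert q P" "p' \<in> insert q P" "p < p'" for p p'
    using that P far[of p] far[of p'] by (auto simp: spaced_def)
  then show "spaced n (insert q P)"
    using P card assms(2) by (simp add: spaced_def)
qed

text \<open>Spending one unit of slack on a new mark far to the right changes nothing on a given
  finite set of cells.\<close>

lemma islimpt_with_slack:
  assumes "x \<in> with_slack (Suc m)"
  shows "x islimpt with_slack m"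
proof (rule islimpt_cylinderI)
  obtain n P where x: "x = strip_config n P" and P: "spaced n P" and slack: "card P + Suc m \<le> n"
    using assms by (auto simp: with_slack_def)
  fix W :: "(int \<times> int) set" assume "finite W"
  define q where "q = Max (insert 0 (P \<union> fst ` W)) + int n + 1"
  have far: "z + int n < q" if "z \<in> P \<union> fst ` W" for z
    using \<open>finite W\<close> P that by (simp add: q_def spaced_def)
  have "0 < n" "card P < n" "q \<notin> P"
    using P slack far by (fastforce simp: spaced_def)+
  have Q: "spaced n (insert q P)" "card (insert q P) = Suc (card P)"
    using spaced_insert_far[OF P \<open>card P < n\<close> far] by simp_all
  then have "strip_config n (insert q P) \<in> with_slack m"
    unfolding with_slack_def using slack by (intro CollectI exI[of _ n] exI[of _ "insert q P"]) simp
  moreover have "strip_config n (insert q P) \<noteq> x"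
  proof
    assume "strip_config n (insert q P) = x"
    then have "marked (strip_config n (insert q P) (q,0)) = marked (x (q,0))"
      by simp
    then show False
      using \<open>q \<notin> P\<close> \<open>0 < n\<close> x by simp
  qed
  moreover have "strip_config n (insert q P) u = x u" if "u \<in> W" for u
  proof -
    have "fst u < q"
      using far[of "fst u"] that by simp
    then show ?thesis
      using strip_config_insert_right[of "fst u" q n P "snd u"] x by (cases u) simp
  qed
  ultimately show "\<exists>y\<in>with_slack m. y \<noteq> x \<and> (\<forall>u\<in>W. y u = x u)"
    by blast
qed

section \<open>Structure of the configurations\<close>

lemma int_step_up:
  fixes a b :: int
  assumes "\<And>y. P y \<Longrightarrow> P (y+1)" and "a \<le> b" and "P a"
  shows "P b"
  using assms(2,3) by (induction b rule: int_ge_induct) (auto intro: assms(1))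

lemma int_step_down:
  fixes a b :: int
  assumes "\<And>y. P (y+1) \<Longrightarrow> P y" and "a \<le> b" and "P b"
  shows "P a"
  using int_step_up[of "\<lambda>y. P (- y)" "- b" "- a"] assms by (simp add: algebra_simps)

lemma int_step_invariant:
  fixes f :: "int \<Rightarrow> 'a"
  assumes "\<And>i. f (i+1) = f i"
  shows "f i = f j"
proof -
  have "f i = f 0" for i
  proof (induction i rule: int_induct[where k=0])
    case (step2 i)
    then show ?case using assms[of "i-1"] by simp
  qed (simp_all add: assms)
  then show ?thesis by metis
qed

lemma int_discrete_ivt:
  fixes a b :: int
  assumes "\<not> P a" "P b" "a \<le> b"
  shows "\<exists>z. a < z \<and> z \<le> b \<and> \<not> P (z-1) \<and> P z"
  using assms(3,2)
proof (induction b rule: int_ge_induct)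
  case base
  with assms(1) show ?case by simp
next
  case (step i)
  then show ?case
    by (cases "P i") (force, intro exI[of _ "i+1"], simp)
qed

definition strip_row :: "config \<Rightarrow> int \<Rightarrow> bool" where
  "strip_row x y \<longleftrightarrow> in_strip (x (0,y))"

definition marks :: "config \<Rightarrow> int set" where
  "marks x = {i. \<exists>y. marked (x (i,y))}"

definition saturated :: "config \<Rightarrow> int \<Rightarrow> bool" where
  "saturated x i \<longleftrightarrow> (\<forall>y. strip_row x y \<longrightarrow> timer (x (i,y)))"

text \<open>Read from right to left, the timer is ambiguous only where it is saturated; the columns
  where saturation begins are recorded separately.\<close>

definition saturation_starts :: "config \<Rightarrow> int set" where
  "saturation_starts x = {i. \<not> saturated x i \<and> saturated x (i+1) \<and> i+1 \<notin> marks x}"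

locale strip_point =
  fixes x :: config
  assumes in_shift: "x \<in> strip_shift"
begin

lemma symbol_less: "x u < 32"
  using in_shift by (auto simp: strip_shift_def)

lemma window: "window_ok (x (i,j)) (x (i+1,j)) (x (i,j+1)) (x (i+1,j+1))"
  using in_shift by (simp add: strip_shift_def)

lemma under_floor:
  "\<not> above_floor (x (i,j)) \<Longrightarrow>
    below_roof (x (i,j)) \<and> budget (x (i,j)) \<and> timer (x (i,j)) \<and> \<not> marked (x (i,j))"
  using window[of i j] by (simp add: window_ok_def cell_ok_def)

lemma budget_below_roof: "budget (x (i,j)) \<Longrightarrow> below_roof (x (i,j))"
  using window[of i j] by (simp add: window_ok_def cell_ok_def)

lemma timer_below_roof: "timer (x (i,j)) \<Longrightarrow> below_roof (x (i,j))"
  using window[of i j] by (simp add: window_ok_def cell_ok_def)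

lemma marked_in_strip: "marked (x (i,j)) \<Longrightarrow> in_strip (x (i,j))"
  using window[of i j] by (simp add: window_ok_def cell_ok_def)

lemma above_floor_Suc: "above_floor (x (i,j)) \<Longrightarrow> above_floor (x (i,j+1))"
  using window[of i j] by (simp add: window_ok_def vert_ok_def)

lemma below_roof_pred: "below_roof (x (i,j+1)) \<Longrightarrow> below_roof (x (i,j))"
  using window[of i j] by (simp add: window_ok_def vert_ok_def)

lemma budget_pred: "budget (x (i,j+1)) \<Longrightarrow> budget (x (i,j))"
  using window[of i j] by (simp add: window_ok_def vert_ok_def)

lemma timer_pred: "timer (x (i,j+1)) \<Longrightarrow> timer (x (i,j))"
  using window[of i j] by (simp add: window_ok_def vert_ok_def)

lemma marked_Suc:
  "in_strip (x (i,j)) \<Longrightarrow> in_strip (x (i,j+1)) \<Longrightarrow> marked (x (i,j+1)) = marked (x (i,j))"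
  using window[of i j] by (simp add: window_ok_def vert_ok_def)

lemma above_floor_right: "above_floor (x (i+1,j)) = above_floor (x (i,j))"
  using window[of i j] by (simp add: window_ok_def horiz_ok_def)

lemma below_roof_right: "below_roof (x (i+1,j)) = below_roof (x (i,j))"
  using window[of i j] by (simp add: window_ok_def horiz_ok_def)

lemma timer_at_mark:
  "in_strip (x (i+1,j+1)) \<Longrightarrow> marked (x (i+1,j+1)) \<Longrightarrow>
    \<not> timer (x (i+1,j+1)) \<and> timer (x (i,j+1)) = below_roof (x (i,j+1))"
  using window[of i j] by (simp add: window_ok_def step_ok_def)

lemma timer_off_mark:
  "in_strip (x (i+1,j+1)) \<Longrightarrow> \<not> marked (x (i+1,j+1)) \<Longrightarrow>
    timer (x (i+1,j+1)) = timer (x (i,j))"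
  using window[of i j] by (simp add: window_ok_def step_ok_def)

lemma budget_at_mark:
  "in_strip (x (i+1,j)) \<Longrightarrow> marked (x (i+1,j)) \<Longrightarrow> budget (x (i+1,j)) = budget (x (i,j+1))"
  using window[of i j] by (simp add: window_ok_def step_ok_def)

lemma budget_off_mark:
  "in_strip (x (i+1,j)) \<Longrightarrow> \<not> marked (x (i+1,j)) \<Longrightarrow> budget (x (i+1,j)) = budget (x (i,j))"
  using window[of i j] by (simp add: window_ok_def step_ok_def)

lemma budget_before_mark:
  "marked (x (i+1,j+1)) \<Longrightarrow> \<not> above_floor (x (i+1,j)) \<Longrightarrow> budget (x (i,j+1))"
  using window[of i j] by (simp add: window_ok_def step_ok_def)

lemma above_floor_row: "above_floor (x (i,y)) = above_floor (x (i',y))"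
  using int_step_invariant[of "\<lambda>i. above_floor (x (i,y))"] above_floor_right by blast

lemma below_roof_row: "below_roof (x (i,y)) = below_roof (x (i',y))"
  using int_step_invariant[of "\<lambda>i. below_roof (x (i,y))"] below_roof_right by blast

lemma in_strip_iff_strip_row: "in_strip (x (i,y)) \<longleftrightarrow> strip_row x y"
  using above_floor_row[of i y 0] below_roof_row[of i y 0] by (simp add: in_strip_def strip_row_def)

lemma above_floor_mono: "y \<le> y' \<Longrightarrow> above_floor (x (i,y)) \<Longrightarrow> above_floor (x (i,y'))"
  by (rule int_step_up[where P="\<lambda>y. above_floor (x (i,y))"]) (auto intro: above_floor_Suc)

lemma below_roof_antimono: "y \<le> y' \<Longrightarrow> below_roof (x (i,y')) \<Longrightarrow> below_roof (x (i,y))"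
  by (rule int_step_down[where P="\<lambda>y. below_roof (x (i,y))"]) (auto intro: below_roof_pred)

lemma budget_antimono: "y \<le> y' \<Longrightarrow> budget (x (i,y')) \<Longrightarrow> budget (x (i,y))"
  by (rule int_step_down[where P="\<lambda>y. budget (x (i,y))"]) (auto intro: budget_pred)

lemma timer_antimono: "y \<le> y' \<Longrightarrow> timer (x (i,y')) \<Longrightarrow> timer (x (i,y))"
  by (rule int_step_down[where P="\<lambda>y. timer (x (i,y))"]) (auto intro: timer_pred)

lemma strip_row_between:
  "strip_row x y \<Longrightarrow> strip_row x y' \<Longrightarrow> y \<le> z \<Longrightarrow> z \<le> y' \<Longrightarrow> strip_row x z"
  unfolding strip_row_def in_strip_def
  using above_floor_mono[of y z 0] below_roof_antimono[of z y' 0] by blast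

lemma marked_column_le:
  assumes "strip_row x y" "strip_row x y'" "y \<le> y'"
  shows "marked (x (i,y')) = marked (x (i,y))"
proof -
  have "z \<le> y' \<longrightarrow> marked (x (i,z)) = marked (x (i,y))" if "y \<le> z" for z
    using that
  proof (induction z rule: int_ge_induct)
    case (step z)
    show ?case
    proof
      assume "z + 1 \<le> y'"
      then have "strip_row x z" "strip_row x (z+1)"
        using strip_row_between[OF assms(1,2)] step(1) by simp_all
      then have "marked (x (i,z+1)) = marked (x (i,z))"
        using marked_Suc[of i z] in_strip_iff_strip_row[of i z] in_strip_iff_strip_row[of i "z+1"]
        by simp
      then show "marked (x (i,z+1)) = marked (x (i,y))"
        using step(2) \<open>z + 1 \<le> y'\<close> by simp
    qed
  qed simp
  from this[of y'] show ?thesis using assms(3) by simp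
qed

lemma marked_column:
  assumes "strip_row x y" "strip_row x y'"
  shows "marked (x (i,y')) = marked (x (i,y))"
proof (cases "y \<le> y'")
  case False
  then show ?thesis
    using marked_column_le[OF assms(2,1)] by simp
qed (use marked_column_le[OF assms] in simp)

lemma marked_iff: "marked (x (i,y)) \<longleftrightarrow> strip_row x y \<and> i \<in> marks x"
proof
  assume "marked (x (i,y))"
  then show "strip_row x y \<and> i \<in> marks x"
    using marked_in_strip[of i y] in_strip_iff_strip_row[of i y] by (auto simp: marks_def)
next
  assume y: "strip_row x y \<and> i \<in> marks x"
  then obtain y' where y': "marked (x (i,y'))"
    by (auto simp: marks_def)
  then have "strip_row x y'"
    using marked_in_strip[of i y'] in_strip_iff_strip_row[of i y'] by simp
  with y y' show "marked (x (i,y))"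
    using marked_column[of y' y i] by simp
qed

lemma strip_row_if_marks: "i \<in> marks x \<Longrightarrow> \<exists>y. strip_row x y"
  unfolding marks_def using marked_iff by blast

lemma saturated_Suc:
  assumes sat: "saturated x i" and "i+1 \<notin> marks x"
  shows "saturated x (i+1)"
  unfolding saturated_def
proof (intro allI impI)
  fix y assume y: "strip_row x y"
  have "timer (x (i,y-1))"
  proof (cases "above_floor (x (i,y-1))")
    case True
    have "below_roof (x (i,y-1))"
      using y below_roof_antimono[of "y-1" y i] in_strip_iff_strip_row[of i y]
      by (simp add: in_strip_def)
    with True have "strip_row x (y-1)"
      using in_strip_iff_strip_row[of i "y-1"] by (simp add: in_strip_def)
    then show ?thesis using sat by (simp add: saturated_def)
  qed (use under_floor in blast)
  then show "timer (x (i+1,y))"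
    using timer_off_mark[of i "y-1"] in_strip_iff_strip_row[of "i+1" y] y marked_iff[of "i+1" y]
      \<open>i+1 \<notin> marks x\<close>
    by simp
qed

lemma saturated_propagates:
  "a \<le> b \<Longrightarrow> saturated x a \<Longrightarrow> \<forall>j. a < j \<and> j \<le> b \<longrightarrow> j \<notin> marks x \<Longrightarrow> saturated x b"
proof (induction b rule: int_ge_induct)
  case (step i)
  then show ?case using saturated_Suc by simp
qed simp

text \<open>In a column \<open>j\<close> without marks in \<open>(p, j]\<close>, the timer layer reaches at most \<open>j - p\<close>
  rows above the floor.\<close>

lemma timer_since_mark:
  assumes "p \<in> marks x" "p \<le> j" "\<forall>m. p < m \<and> m \<le> j \<longrightarrow> m \<notin> marks x" "timer (x (j,y))"
  shows "\<not> above_floor (x (0, y - (j - p)))"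
  using assms(2-4)
proof (induction j arbitrary: y rule: int_ge_induct)
  case base
  show ?case
  proof
    assume "above_floor (x (0, y - (p - p)))"
    then have "strip_row x y"
      using base(2) timer_below_roof[of p y] above_floor_row[of 0 y p]
        in_strip_iff_strip_row[of p y]
      by (simp add: in_strip_def)
    then show False
      using base timer_at_mark[of "p-1" "y-1"] marked_iff[of p y] assms(1)
        in_strip_iff_strip_row[of p y]
      by simp
  qed
next
  case (step j)
  show ?case
  proof
    assume floor: "above_floor (x (0, y - (j + 1 - p)))"
    then have "above_floor (x (j+1, y))"
      using above_floor_mono[of "y - (j + 1 - p)" y 0] above_floor_row[of 0 y "j+1"] step(1)
      by simp
    then have "strip_row x y"
      using step.prems(2) timer_below_roof[of "j+1" y] in_strip_iff_strip_row[of "j+1" y]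
      by (simp add: in_strip_def)
    moreover have "j+1 \<notin> marks x"
      using step.prems(1) step.hyps by simp
    ultimately have "timer (x (j, y-1))"
      using step.prems(2) timer_off_mark[of j "y-1"] in_strip_iff_strip_row[of "j+1" y]
        marked_iff[of "j+1" y]
      by simp
    then have "\<not> above_floor (x (0, y - 1 - (j - p)))"
      using step.IH step.prems(1) by simp
    with floor show False by (simp add: algebra_simps)
  qed
qed

lemma next_mark:
  assumes "p \<in> marks x" "q \<in> marks x" "p < q"
  obtains r where "r \<in> marks x" "p < r" "\<forall>m. p < m \<and> m < r \<longrightarrow> m \<notin> marks x"
proof -
  let ?R = "{m \<in> marks x. p < m \<and> m \<le> q}"
  have "finite ?R" "q \<in> ?R"
    using assms by (auto intro: finite_subset[of _ "{p..q}"])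
  then show thesis
    using that[of "Min ?R"] Min_in[of ?R] Min_le[of ?R] by fastforce
qed

lemma under_floor_before_mark:
  assumes "p \<in> marks x" "r \<in> marks x" "p < r" "\<forall>m. p < m \<and> m < r \<longrightarrow> m \<notin> marks x"
    and "strip_row x y"
  shows "\<not> above_floor (x (0, y - (r - 1 - p)))"
proof -
  have "timer (x (r-1, y)) = below_roof (x (r-1, y))"
    using assms(2,5) marked_iff[of r y] timer_at_mark[of "r-1" "y-1"] in_strip_iff_strip_row[of r y]
    by simp
  moreover have "below_roof (x (r-1, y))"
    using assms(5) in_strip_iff_strip_row[of "r-1" y] by (simp add: in_strip_def)
  ultimately show ?thesis
    using timer_since_mark[of p "r-1" y] assms by simp
qed

text \<open>The timer climbs one row per column starting at the floor, so it never fills an unbounded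
  strip; such a strip therefore carries at most one mark.\<close>

lemma marks_subsingleton_if_unbounded:
  assumes unbounded: "(\<forall>y. above_floor (x (0,y))) \<or> (\<forall>y. below_roof (x (0,y)))"
  shows "p \<in> marks x \<Longrightarrow> q \<in> marks x \<Longrightarrow> p = q"
proof (induction p q rule: linorder_wlog)
  case (le p q)
  show ?case
  proof (rule ccontr)
    assume "p \<noteq> q"
    with le obtain r where r: "r \<in> marks x" "p < r" "\<forall>m. p < m \<and> m < r \<longrightarrow> m \<notin> marks x"
      using next_mark[of p q] by auto
    obtain y where y: "strip_row x y"
      using strip_row_if_marks \<open>p \<in> marks x\<close> by blast
    show False
      using unbounded
    proof
      assume "\<forall>y. above_floor (x (0,y))"
      then show False
        using under_floor_before_mark[OF \<open>p \<in> marks x\<close> r y] by blast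
    next
      assume roofless: "\<forall>y. below_roof (x (0,y))"
      have "above_floor (x (0, y + (r - 1 - p)))"
        using y r(2) above_floor_mono[of y "y + (r - 1 - p)" 0]
        by (simp add: strip_row_def in_strip_def)
      with roofless have "strip_row x (y + (r - 1 - p))"
        by (simp add: strip_row_def in_strip_def)
      then have "\<not> above_floor (x (0, y + (r - 1 - p) - (r - 1 - p)))"
        using under_floor_before_mark[OF \<open>p \<in> marks x\<close> r] by blast
      then show False
        using y by (simp add: strip_row_def in_strip_def)
    qed
  qed
qed (simp add: eq_commute)

definition budget_rows :: "int \<Rightarrow> int set" where
  "budget_rows i = {y. strip_row x y \<and> budget (x (i,y))}"

lemma budget_rows_off_mark: "i+1 \<notin> marks x \<Longrightarrow> budget_rows (i+1) = budget_rows i"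
  unfolding budget_rows_def
  using budget_off_mark[of i] in_strip_iff_strip_row[of "i+1"] marked_iff[of "i+1"] by auto

context
  fixes Y y2 :: int
  assumes bottom: "strip_row x Y" "\<not> above_floor (x (0,Y-1))"
    and roof: "\<not> below_roof (x (0,y2))"
begin

lemma strip_row_bounds: "strip_row x y \<Longrightarrow> y \<in> {Y..<y2}"
  using bottom(2) roof above_floor_mono[of y "Y-1" 0] below_roof_antimono[of y2 y 0]
  by (force simp: strip_row_def in_strip_def)

lemma finite_budget_rows: "finite (budget_rows i)"
  using strip_row_bounds by (auto simp: budget_rows_def intro: finite_subset[of _ "{Y..<y2}"])

text \<open>At a mark the budget layer moves down one row and loses the bottom row of the strip;
  this bounds the number of marks.\<close>

lemma card_budget_rows_at_mark:
  assumes "i+1 \<in> marks x"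
  shows "card (budget_rows (i+1)) < card (budget_rows i)"
proof -
  have shift: "(\<lambda>y. y+1) ` budget_rows (i+1) \<subseteq> budget_rows i - {Y}"
  proof clarify
    fix y assume "y \<in> budget_rows (i+1)"
    then have y: "strip_row x y" "budget (x (i+1,y))"
      by (auto simp: budget_rows_def)
    then have "budget (x (i,y+1))"
      using assms budget_at_mark[of i y] in_strip_iff_strip_row[of "i+1" y] marked_iff[of "i+1" y]
      by simp
    moreover have "strip_row x (y+1)"
      using y(1) calculation budget_below_roof[of i "y+1"] above_floor_mono[of y "y+1" 0]
        below_roof_row[of i "y+1" 0]
      by (simp add: strip_row_def in_strip_def)
    moreover have "y+1 \<noteq> Y"
      using y(1) bottom(2) by (auto simp: strip_row_def in_strip_def)
    ultimately show "y+1 \<in> budget_rows i - {Y}"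
      by (simp add: budget_rows_def)
  qed
  have "marked (x (i+1,Y))"
    using assms bottom(1) marked_iff[of "i+1" Y] by simp
  moreover have "\<not> above_floor (x (i+1,Y-1))"
    using bottom(2) above_floor_row[of "i+1" "Y-1" 0] by simp
  ultimately have "Y \<in> budget_rows i"
    using budget_before_mark[of i "Y-1"] bottom(1) by (simp add: budget_rows_def)
  have "card (budget_rows (i+1)) = card ((\<lambda>y. y+1) ` budget_rows (i+1))"
    by (simp add: card_image)
  also have "\<dots> \<le> card (budget_rows i - {Y})"
    using shift finite_budget_rows by (intro card_mono) auto
  also have "\<dots> < card (budget_rows i)"
    using finite_budget_rows \<open>Y \<in> budget_rows i\<close> by (rule card_Diff1_less)
  finally show ?thesis .
qed

lemma card_budget_rows_antimono: "a \<le> b \<Longrightarrow> card (budget_rows b) \<le> card (budget_rows a)"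
proof (induction b rule: int_ge_induct)
  case (step i)
  then show ?case
    using budget_rows_off_mark[of i] card_budget_rows_at_mark[of i]
    by (cases "i+1 \<in> marks x") auto
qed simp

lemma finite_marks_bounded_strip: "finite (marks x)"
proof (rule inj_on_finite[where f="\<lambda>i. card (budget_rows i)" and B="{..card {Y..<y2}}"])
  show "inj_on (\<lambda>i. card (budget_rows i)) (marks x)"
  proof (rule linorder_inj_onI')
    fix p q assume "p \<in> marks x" "q \<in> marks x" "p < q"
    have "card (budget_rows q) < card (budget_rows (q-1))"
      using card_budget_rows_at_mark[of "q-1"] \<open>q \<in> marks x\<close> by simp
    also have "\<dots> \<le> card (budget_rows p)"
      using card_budget_rows_antimono[of p "q-1"] \<open>p < q\<close> by simp
    finally show "card (budget_rows p) \<noteq> card (budget_rows q)"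
      by simp
  qed
  have "card (budget_rows i) \<le> card {Y..<y2}" for i
    by (rule card_mono) (auto simp: budget_rows_def dest: strip_row_bounds)
  then show "(\<lambda>i. card (budget_rows i)) ` marks x \<subseteq> {..card {Y..<y2}}"
    by auto
qed simp

end

lemma finite_marks: "finite (marks x)"
proof (cases "\<exists>y. strip_row x y")
  case False
  then have "marks x = {}"
    using strip_row_if_marks by blast
  then show ?thesis by simp
next
  case True
  then obtain y0 where y0: "strip_row x y0" ..
  show ?thesis
  proof (cases "(\<forall>y. above_floor (x (0,y))) \<or> (\<forall>y. below_roof (x (0,y)))")
    case True
    show ?thesis
    proof (cases "marks x = {}")
      case False
      then obtain p where "p \<in> marks x" by blast
      then have "marks x \<subseteq> {p}"
        using marks_subsingleton_if_unbounded[OF True] by blast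
      then show ?thesis
        using finite_subset by blast
    qed simp
  next
    case False
    then obtain y1 y2 where y1: "\<not> above_floor (x (0,y1))" and y2: "\<not> below_roof (x (0,y2))"
      by blast
    have "y1 < y0"
      using y0 y1 above_floor_mono[of y0 y1 0] by (force simp: strip_row_def in_strip_def)
    then obtain Y where "y1 < Y" "Y \<le> y0" "\<not> above_floor (x (0,Y-1))" "above_floor (x (0,Y))"
      using int_discrete_ivt[of "\<lambda>y. above_floor (x (0,y))" y1 y0] y1 y0
      by (auto simp: strip_row_def in_strip_def)
    moreover from this have "strip_row x Y"
      using y0 below_roof_antimono[of Y y0 0] by (simp add: strip_row_def in_strip_def)
    ultimately show ?thesis
      using finite_marks_bounded_strip y2 by blast
  qed
qed

lemma mark_between_saturation_starts:
  assumes "i \<in> saturation_starts x" "i' \<in> saturation_starts x" "i < i'"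
  shows "\<exists>p\<in>marks x. i < p \<and> p \<le> i'"
proof (rule ccontr)
  assume "\<not> ?thesis"
  then have "\<forall>j. i+1 < j \<and> j \<le> i' \<longrightarrow> j \<notin> marks x"
    by auto
  moreover have "saturated x (i+1)"
    using assms(1) by (simp add: saturation_starts_def)
  ultimately have "saturated x i'"
    using saturated_propagates[of "i+1" i'] assms(3) by simp
  then show False
    using assms(2) by (simp add: saturation_starts_def)
qed

lemma finite_saturation_starts: "finite (saturation_starts x)"
proof -
  define last_mark where
    "last_mark i = (if {p\<in>marks x. p \<le> i} = {} then None else Some (Max {p\<in>marks x. p \<le> i}))"
    for i
  have fin: "finite {p\<in>marks x. p \<le> i}" for i
    using finite_marks by simp
  have last_mark_le: "p \<in> marks x \<and> p \<le> i" if "last_mark i = Some p" for i p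
  proof -
    have "{q\<in>marks x. q \<le> i} \<noteq> {}" "p = Max {q\<in>marks x. q \<le> i}"
      using that by (simp_all add: last_mark_def split: if_splits)
    then show ?thesis
      using Max_in[OF fin] by blast
  qed
  have "inj_on last_mark (saturation_starts x)"
  proof (rule linorder_inj_onI')
    fix i i' assume "i \<in> saturation_starts x" "i' \<in> saturation_starts x" "i < i'"
    then obtain p where p: "p \<in> marks x" "i < p" "p \<le> i'"
      using mark_between_saturation_starts by blast
    then have last: "last_mark i' = Some (Max {q\<in>marks x. q \<le> i'})"
      and "p \<le> Max {q\<in>marks x. q \<le> i'}"
      using fin[of i'] by (auto simp: last_mark_def)
    show "last_mark i \<noteq> last_mark i'"
    proof
      assume "last_mark i = last_mark i'"
      then have "Max {q\<in>marks x. q \<le> i'} \<le> i"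
        using last last_mark_le[of i] by simp
      then show False
        using \<open>p \<le> Max {q\<in>marks x. q \<le> i'}\<close> \<open>i < p\<close> by simp
    qed
  qed
  moreover have "last_mark i \<in> insert None (Some ` marks x)" for i
    using last_mark_le[of i] by (cases "last_mark i") auto
  ultimately show ?thesis
    using finite_marks by (intro inj_on_finite[of last_mark _ "insert None (Some ` marks x)"]) auto
qed

lemma outside_strip:
  assumes "\<not> in_strip (x (i,y))"
  shows "budget (x (i,y)) \<longleftrightarrow> \<not> above_floor (x (i,y))"
    "timer (x (i,y)) \<longleftrightarrow> \<not> above_floor (x (i,y))" "\<not> marked (x (i,y))"
  using assms under_floor[of i y] budget_below_roof[of i y] timer_below_roof[of i y]
    marked_in_strip[of i y]
  by (auto simp: in_strip_def)

lemma in_strip_right: "in_strip (x (i+1,y)) \<longleftrightarrow> in_strip (x (i,y))"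
  using in_strip_iff_strip_row by simp

lemma strip_right:
  assumes "in_strip (x (i,y))"
  shows "marked (x (i+1,y)) \<longleftrightarrow> i+1 \<in> marks x"
    "budget (x (i+1,y)) = (if i+1 \<in> marks x then budget (x (i,y+1)) else budget (x (i,y)))"
    "timer (x (i+1,y)) \<longleftrightarrow> i+1 \<notin> marks x \<and> timer (x (i,y-1))"
proof -
  have strip: "in_strip (x (i+1,y))" "strip_row x y"
    using assms in_strip_right in_strip_iff_strip_row by simp_all
  show mark: "marked (x (i+1,y)) \<longleftrightarrow> i+1 \<in> marks x"
    using strip marked_iff by simp
  show "budget (x (i+1,y)) = (if i+1 \<in> marks x then budget (x (i,y+1)) else budget (x (i,y)))"
    using strip mark budget_at_mark[of i y] budget_off_mark[of i y] by auto
  show "timer (x (i+1,y)) \<longleftrightarrow> i+1 \<notin> marks x \<and> timer (x (i,y-1))"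
    using strip mark timer_at_mark[of i "y-1"] timer_off_mark[of i "y-1"] by auto
qed

lemma budget_left:
  assumes "in_strip (x (i+1,y))"
  shows "budget (x (i,y)) = (if i+1 \<notin> marks x then budget (x (i+1,y))
    else if above_floor (x (i+1,y-1)) then budget (x (i+1,y-1)) else True)"
proof -
  have "strip_row x y"
    using assms in_strip_iff_strip_row by simp
  then have mark: "marked (x (i+1,y)) \<longleftrightarrow> i+1 \<in> marks x"
    using marked_iff by simp
  have "budget (x (i,y)) = budget (x (i+1,y-1))"
    if "i+1 \<in> marks x" "above_floor (x (i+1,y-1))"
  proof -
    have "in_strip (x (i+1,y-1))"
      using assms that(2) below_roof_antimono[of "y-1" y "i+1"] by (simp add: in_strip_def)
    moreover from this have "marked (x (i+1,y-1))"
      using that(1) marked_iff in_strip_iff_strip_row by simp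
    ultimately show ?thesis
      using budget_at_mark[of i "y-1"] by simp
  qed
  moreover have "budget (x (i,y))" if "i+1 \<in> marks x" "\<not> above_floor (x (i+1,y-1))"
    using that assms mark budget_before_mark[of i "y-1"] by simp
  ultimately show ?thesis
    using assms mark budget_off_mark[of i y] by auto
qed

lemma timer_top_row:
  assumes "in_strip (x (i,y))" "\<not> below_roof (x (i,y+1))"
  shows "timer (x (i,y)) \<longleftrightarrow> saturated x i"
proof
  assume "timer (x (i,y))"
  have "y' \<le> y" if "strip_row x y'" for y'
  proof (rule ccontr)
    assume "\<not> y' \<le> y"
    then show False
      using assms(2) that below_roof_antimono[of "y+1" y' i] in_strip_iff_strip_row[of i y']
      by (simp add: in_strip_def)
  qed
  then show "saturated x i"
    using \<open>timer (x (i,y))\<close> timer_antimono by (auto simp: saturated_def)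
next
  assume "saturated x i"
  then show "timer (x (i,y))"
    using assms(1) in_strip_iff_strip_row by (simp add: saturated_def)
qed

lemma saturated_off_mark:
  "i+1 \<notin> marks x \<Longrightarrow> saturated x i \<longleftrightarrow> saturated x (i+1) \<and> i \<notin> saturation_starts x"
  using saturated_Suc by (auto simp: saturation_starts_def)

lemma timer_left:
  assumes "in_strip (x (i+1,y))"
  shows "timer (x (i,y)) = (if i+1 \<in> marks x then True
    else if below_roof (x (i+1,y+1)) then timer (x (i+1,y+1))
    else saturated x (i+1) \<and> i \<notin> saturation_starts x)"
proof -
  have strip: "in_strip (x (i,y))" "strip_row x y"
    using assms in_strip_right in_strip_iff_strip_row by simp_all
  have "timer (x (i,y))" if "i+1 \<in> marks x"
    using that strip timer_at_mark[of i "y-1"] marked_iff[of "i+1" y] in_strip_iff_strip_row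
    by (simp add: in_strip_def)
  moreover have "timer (x (i,y)) = timer (x (i+1,y+1))"
    if "i+1 \<notin> marks x" "below_roof (x (i+1,y+1))"
  proof -
    have "in_strip (x (i+1,y+1))"
      using assms that(2) above_floor_Suc[of "i+1" y] by (simp add: in_strip_def)
    moreover from this have "\<not> marked (x (i+1,y+1))"
      using that(1) marked_iff in_strip_iff_strip_row by simp
    ultimately show ?thesis
      using timer_off_mark[of i y] by simp
  qed
  moreover have "\<not> below_roof (x (i,y+1))" if "\<not> below_roof (x (i+1,y+1))"
    using that below_roof_right by simp
  ultimately show ?thesis
    using timer_top_row[OF strip(1)] saturated_off_mark[of i] by auto
qed

lemma saturated_iff_column: "saturated x i \<longleftrightarrow> (\<forall>y. in_strip (x (i,y)) \<longrightarrow> timer (x (i,y)))"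
  using in_strip_iff_strip_row by (simp add: saturated_def)

end

section \<open>Countability\<close>

lemma next_column_eq:
  assumes x: "x \<in> strip_shift" and x': "x' \<in> strip_shift" and "marks x = marks x'"
    and col: "\<And>y. x (i,y) = x' (i,y)"
  shows "x (i+1,y) = x' (i+1,y)"
proof -
  interpret x: strip_point x using x by unfold_locales
  interpret x': strip_point x' using x' by unfold_locales
  have same_frame: "above_floor (x (i+1,y)) = above_floor (x' (i+1,y))"
      "below_roof (x (i+1,y)) = below_roof (x' (i+1,y))"
    using col[of y] x.above_floor_right x'.above_floor_right x.below_roof_right x'.below_roof_right
    by simp_all
  show ?thesis
  proof (cases "in_strip (x (i,y))")
    case True
    then have "in_strip (x' (i,y))" using col by simp
    with True show ?thesis
      using same_frame x.strip_right x'.strip_right col[of "y-1"] col[of y] col[of "y+1"]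
        \<open>marks x = marks x'\<close>
      by (intro symbol_eqI x.symbol_less x'.symbol_less) simp_all
  next
    case False
    then have "\<not> in_strip (x (i+1,y))" "\<not> in_strip (x' (i+1,y))"
      using col[of y] x.in_strip_right x'.in_strip_right by simp_all
    then show ?thesis
      using same_frame x.outside_strip x'.outside_strip
      by (intro symbol_eqI x.symbol_less x'.symbol_less) simp_all
  qed
qed

lemma prev_column_eq:
  assumes x: "x \<in> strip_shift" and x': "x' \<in> strip_shift" and "marks x = marks x'"
    and "saturation_starts x = saturation_starts x'" and col: "\<And>y. x (i+1,y) = x' (i+1,y)"
  shows "x (i,y) = x' (i,y)"
proof -
  interpret x: strip_point x using x by unfold_locales
  interpret x': strip_point x' using x' by unfold_locales
  have same_frame: "above_floor (x (i,y)) = above_floor (x' (i,y))"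
      "below_roof (x (i,y)) = below_roof (x' (i,y))"
    using col[of y] x.above_floor_right x'.above_floor_right x.below_roof_right x'.below_roof_right
    by metis+
  have "saturated x (i+1) = saturated x' (i+1)"
    using col x.saturated_iff_column x'.saturated_iff_column by simp
  show ?thesis
  proof (cases "in_strip (x (i+1,y))")
    case True
    then have "in_strip (x' (i+1,y))" using col by simp
    moreover have "marked (x (i,y)) = marked (x' (i,y))"
      using True calculation x.strip_right x'.strip_right x.in_strip_right x'.in_strip_right
        x.marked_iff x'.marked_iff x.in_strip_iff_strip_row x'.in_strip_iff_strip_row assms(3)
      by metis
    ultimately show ?thesis
      using True same_frame x.budget_left x'.budget_left x.timer_left x'.timer_left
        col[of "y-1"] col[of y] col[of "y+1"] assms(3,4) \<open>saturated x (i+1) = saturated x' (i+1)\<close>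
      by (intro symbol_eqI x.symbol_less x'.symbol_less) simp_all
  next
    case False
    then have "\<not> in_strip (x (i,y))" "\<not> in_strip (x' (i,y))"
      using col[of y] x.in_strip_right[of i y] x'.in_strip_right[of i y] by simp_all
    then show ?thesis
      using same_frame x.outside_strip x'.outside_strip
      by (intro symbol_eqI x.symbol_less x'.symbol_less) simp_all
  qed
qed

lemma strip_shift_eqI:
  assumes "x \<in> strip_shift" "x' \<in> strip_shift" "\<And>y. x (0,y) = x' (0,y)"
    and "marks x = marks x'" "saturation_starts x = saturation_starts x'"
  shows "x = x'"
proof -
  have "x (i,y) = x' (i,y)" for i y
  proof (induction i arbitrary: y rule: int_induct[where k=0])
    case base
    then show ?case using assms(3) .
  next
    case (step1 i)
    then show ?case using next_column_eq[OF assms(1,2,4)] by blast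
  next
    case (step2 i)
    then show ?case using prev_column_eq[OF assms(1,2,4,5), of "i-1"] by simp
  qed
  then show ?thesis by auto
qed

definition int_intervals :: "int set set" where
  "int_intervals = {S. \<forall>a\<in>S. \<forall>b\<in>S. {a..b} \<subseteq> S}"

lemma countable_int_intervals: "countable int_intervals"
proof (rule countable_subset)
  show "int_intervals \<subseteq> {{}, UNIV} \<union>
      (\<Union>a. \<Union>b. {{..<b}, {..b}, {a<..}, {a..}, {a<..<b}, {a<..b}, {a..<b}, {a..b}})"
  proof
    fix S assume S: "S \<in> int_intervals"
    have "x \<in> S" if "a \<in> S" "b \<in> S" "a \<le> x" "x \<le> b" for a b x
    proof -
      have "{a..b} \<subseteq> S"
        using S that(1,2) by (simp add: int_intervals_def)
      with that(3,4) show ?thesis by auto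
    qed
    then have "\<exists>a b. S = {} \<or> S = UNIV \<or> S = {..<b} \<or> S = {..b} \<or> S = {a<..} \<or> S = {a..} \<or>
        S = {a<..<b} \<or> S = {a<..b} \<or> S = {a..<b} \<or> S = {a..b}"
      by (rule interval_cases)
    then show "S \<in> {{}, UNIV} \<union>
        (\<Union>a. \<Union>b. {{..<b}, {..b}, {a<..}, {a..}, {a<..<b}, {a<..b}, {a..<b}, {a..b}})"
      by blast
  qed
qed simp

lemma upward_closed_int_interval: "(\<And>a t. a \<in> S \<Longrightarrow> a \<le> t \<Longrightarrow> t \<in> S) \<Longrightarrow> S \<in> int_intervals"
  by (auto simp: int_intervals_def)

lemma downward_closed_int_interval: "(\<And>b t. b \<in> S \<Longrightarrow> t \<le> b \<Longrightarrow> t \<in> S) \<Longrightarrow> S \<in> int_intervals"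
  by (auto simp: int_intervals_def)

definition column_layers :: "config \<Rightarrow> int set \<times> int set \<times> int set \<times> int set" where
  "column_layers x = ({y. above_floor (x (0,y))}, {y. below_roof (x (0,y))},
    {y. budget (x (0,y))}, {y. timer (x (0,y))})"

lemma (in strip_point) column_layers_in_int_intervals:
  "column_layers x \<in> int_intervals \<times> int_intervals \<times> int_intervals \<times> int_intervals"
proof -
  have "{y. above_floor (x (0,y))} \<in> int_intervals"
    by (rule upward_closed_int_interval) (auto dest: above_floor_mono)
  moreover have "{y. below_roof (x (0,y))} \<in> int_intervals"
    by (rule downward_closed_int_interval) (auto dest: below_roof_antimono)
  moreover have "{y. budget (x (0,y))} \<in> int_intervals"
    by (rule downward_closed_int_interval) (auto dest: budget_antimono)
  moreover have "{y. timer (x (0,y))} \<in> int_intervals"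
    by (rule downward_closed_int_interval) (auto dest: timer_antimono)
  ultimately show ?thesis
    by (simp add: column_layers_def)
qed

lemma column_zero_eq:
  assumes x: "x \<in> strip_shift" and x': "x' \<in> strip_shift"
    and "column_layers x = column_layers x'" "marks x = marks x'"
  shows "x (0,y) = x' (0,y)"
proof -
  interpret x: strip_point x using x by unfold_locales
  interpret x': strip_point x' using x' by unfold_locales
  show ?thesis
    using assms(3,4) x.marked_iff[of 0 y] x'.marked_iff[of 0 y]
    by (intro symbol_eqI x.symbol_less x'.symbol_less)
      (simp_all add: column_layers_def set_eq_iff strip_row_def in_strip_def)
qed

lemma countable_strip_shift: "countable strip_shift"
proof -
  define data where "data x = (column_layers x, marks x, saturation_starts x)" for x
  let ?codes = "(int_intervals \<times> int_intervals \<times> int_intervals \<times> int_intervals) \<times>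
      Collect (finite :: int set \<Rightarrow> bool) \<times> Collect (finite :: int set \<Rightarrow> bool)"
  have "inj_on data strip_shift"
    using column_zero_eq strip_shift_eqI by (intro inj_onI) (simp add: data_def)
  moreover have "data ` strip_shift \<subseteq> ?codes"
    using strip_point.column_layers_in_int_intervals strip_point.finite_marks
      strip_point.finite_saturation_starts
    by (simp add: image_subset_iff data_def strip_point_def)
  moreover have "countable ?codes"
    by (intro countable_SIGMA countable_int_intervals countable_Collect_finite)
  ultimately show ?thesis
    using countable_image_inj_on countable_subset by blast
qed

theorem mainTheorem4:
  shows "\<exists>S X. is_SFT S X \<and> countable X \<and> (\<forall>n. cb_iter (Suc n) X \<noteq> cb_iter n X)"
proof (intro exI conjI allI)
  show "is_SFT {..<32} strip_shift" and "countable strip_shift"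
    by (fact is_SFT_strip_shift, fact countable_strip_shift)
  fix n
  have "with_slack n \<subseteq> cb_iter n strip_shift"
    using with_slack_subset with_slack_Suc_subset islimpt_with_slack by (rule subset_cb_iter)
  then have "cb_iter n strip_shift \<noteq> {}"
    using with_slack_nonempty by blast
  then show "cb_iter (Suc n) strip_shift \<noteq> cb_iter n strip_shift"
    by (rule cb_iter_Suc_neq[OF compact_SFT[OF is_SFT_strip_shift] countable_strip_shift])
qed

end
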